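(* A risk-sharing rule $\boldsymbol{C}$ on $\chi^n$ is the uniform RS rule if and only if it satisfies the reshuffling property and has source-anonymous contributions.
   Context: Fix a probability space $(\Omega,\mathcal{F},\mathbb{P})$ and an integer $n\ge 1$. Let $\chi$ be a convex cone of non-negative random variables on this space (closed under addition and under multiplication by positive scalars) with $0\in\chi$. All equalities between random variables are understood almost surely. A pool is a vector $\boldsymbol{X}=(X_1,\ldots,X_n)\in\chi^n$, with aggregate loss $S_{\boldsymbol{X}}=\sum_{i=1}^n X_i$. A risk-sharing (RS) rule is a mapping $\boldsymbol{C}$ assigning to every pool $\boldsymbol{X}\in\chi^n$ a vector $\boldsymbol{C}[\boldsymbol{X}]=(C_1[\boldsymbol{X}],\ldots,C_n[\boldsymbol{X}])$ of real-valued random variables satisfying $\sum_{i=1}^n C_i[\boldsymbol{X}]=S_{\boldsymbol{X}}$. The uniform RS rule is given by $C_i[\boldsymbol{X}]=S_{\boldsymbol{X}}/n$ for all $i$ and all pools $\boldsymbol{X}$. For a permutation $\pi$ of $\{1,\ldots,n\}$, the reshuffle of $\boldsymbol{X}$ is $\boldsymbol{X}^\pi=(X_{\pi(1)},\ldots,X_{\pi(n)})$. The rule satisfies the reshuffling property if $C_i[\boldsymbol{X}^\pi]=C_{\pi(i)}[\boldsymbol{X}]$ for every pool $\boldsymbol{X}$, every permutation $\pi$ and every $i$. It has source-anonymous contributions if $C_i[\boldsymbol{X}^\pi]=C_i[\boldsymbol{X}]$ for every pool $\boldsymbol{X}$, every permutation $\pi$ and every $i$. *)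

theory Defs
  imports "HOL-Probability.Probability"
begin

text \<open>Pools are indexed by a finite type 'n with CARD('n) = n (n \<ge> 1 automatically).\<close>

definition rv_cone :: "'a measure \<Rightarrow> ('a \<Rightarrow> real) set \<Rightarrow> bool" where
  "rv_cone M K \<longleftrightarrow>
     (\<forall>X\<in>K. X \<in> borel_measurable M \<and> (AE \<omega> in M. 0 \<le> X \<omega>)) \<and>
     (\<lambda>\<omega>. 0) \<in> K \<and>
     (\<forall>X\<in>K. \<forall>Y\<in>K. (\<lambda>\<omega>. X \<omega> + Y \<omega>) \<in> K) \<and>
     (\<forall>X\<in>K. \<forall>c::real. c > 0 \<longrightarrow> (\<lambda>\<omega>. c * X \<omega>) \<in> K)"

definition pool :: "('a \<Rightarrow> real) set \<Rightarrow> ('n::finite \<Rightarrow> 'a \<Rightarrow> real) \<Rightarrow> bool" where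
  "pool K X \<longleftrightarrow> (\<forall>i. X i \<in> K)"

definition agg :: "('n::finite \<Rightarrow> 'a \<Rightarrow> real) \<Rightarrow> 'a \<Rightarrow> real" where
  "agg X = (\<lambda>\<omega>. \<Sum>i\<in>UNIV. X i \<omega>)"

definition rs_rule :: "'a measure \<Rightarrow> ('a \<Rightarrow> real) set \<Rightarrow>
    (('n::finite \<Rightarrow> 'a \<Rightarrow> real) \<Rightarrow> 'n \<Rightarrow> 'a \<Rightarrow> real) \<Rightarrow> bool" where
  "rs_rule M K C \<longleftrightarrow>
     (\<forall>X. pool K X \<longrightarrow>
        (\<forall>i. C X i \<in> borel_measurable M) \<and>
        (AE \<omega> in M. (\<Sum>i\<in>UNIV. C X i \<omega>) = agg X \<omega>))"

definition uniform_rule :: "'a measure \<Rightarrow> ('a \<Rightarrow> real) set \<Rightarrow>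
    (('n::finite \<Rightarrow> 'a \<Rightarrow> real) \<Rightarrow> 'n \<Rightarrow> 'a \<Rightarrow> real) \<Rightarrow> bool" where
  "uniform_rule M K C \<longleftrightarrow>
     (\<forall>X. pool K X \<longrightarrow> (\<forall>i. AE \<omega> in M. C X i \<omega> = agg X \<omega> / real CARD('n)))"

definition reshuffling :: "'a measure \<Rightarrow> ('a \<Rightarrow> real) set \<Rightarrow>
    (('n::finite \<Rightarrow> 'a \<Rightarrow> real) \<Rightarrow> 'n \<Rightarrow> 'a \<Rightarrow> real) \<Rightarrow> bool" where
  "reshuffling M K C \<longleftrightarrow>
     (\<forall>X \<pi>. pool K X \<longrightarrow> \<pi> permutes (UNIV :: 'n set) \<longrightarrow>
        (\<forall>i. AE \<omega> in M. C (X \<circ> \<pi>) i \<omega> = C X (\<pi> i) \<omega>))"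

definition source_anonymous :: "'a measure \<Rightarrow> ('a \<Rightarrow> real) set \<Rightarrow>
    (('n::finite \<Rightarrow> 'a \<Rightarrow> real) \<Rightarrow> 'n \<Rightarrow> 'a \<Rightarrow> real) \<Rightarrow> bool" where
  "source_anonymous M K C \<longleftrightarrow>
     (\<forall>X \<pi>. pool K X \<longrightarrow> \<pi> permutes (UNIV :: 'n set) \<longrightarrow>
        (\<forall>i. AE \<omega> in M. C (X \<circ> \<pi>) i \<omega> = C X i \<omega>))"

end

theory Submission
  imports Defs
begin

text \<open>Under the uniform rule every share is S/n, and S is invariant under reshuffling, so
any two shares of X and of a reshuffle of X coincide; this gives both properties.
Conversely, for the transposition \<pi> of i and j the two properties give
C X j = C (X \<circ> \<pi>) i = C X i, so all shares are equal and, summing to S, each is S/n.\<close>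

lemma agg_permute:
  assumes "\<pi> permutes (UNIV :: 'n::finite set)"
  shows "agg (X \<circ> \<pi>) = (agg X :: 'a \<Rightarrow> real)"
proof
  fix \<omega>
  show "agg (X \<circ> \<pi>) \<omega> = agg X \<omega>"
    unfolding agg_def using sum.permute[OF assms, of "\<lambda>i. X i \<omega>"] by (simp add: comp_def)
qed

lemma pool_comp: "pool K X \<Longrightarrow> pool K (X \<circ> \<pi>)"
  by (simp add: pool_def)

lemma equal_summands_eq_sum_div_card:
  fixes c :: "'n::finite \<Rightarrow> real"
  assumes "\<And>j. c j = c i" and "(\<Sum>j\<in>UNIV. c j) = s"
  shows "c i = s / real CARD('n)"
proof -
  have "s = (\<Sum>j\<in>(UNIV :: 'n set). c i)"
    unfolding assms(2)[symmetric] by (rule sum.cong) (auto intro: assms(1))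
  then have "s = real CARD('n) * c i"
    by simp
  then show ?thesis by simp
qed

lemma uniform_rule_share_permute:
  assumes "uniform_rule M K C" and "pool K X" and "\<pi> permutes (UNIV :: 'n::finite set)"
  shows "AE \<omega> in M. C (X \<circ> \<pi>) i \<omega> = C X j \<omega>"
proof -
  have "AE \<omega> in M. C (X \<circ> \<pi>) i \<omega> = agg (X \<circ> \<pi>) \<omega> / real CARD('n)"
    using assms(1) pool_comp[OF assms(2)] unfolding uniform_rule_def by blast
  moreover have "AE \<omega> in M. C X j \<omega> = agg X \<omega> / real CARD('n)"
    using assms(1,2) unfolding uniform_rule_def by blast
  ultimately show ?thesis
    by eventually_elim (simp add: agg_permute[OF assms(3)])
qed

lemma uniform_rule_imp_reshuffling: "uniform_rule M K C \<Longrightarrow> reshuffling M K C"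
  unfolding reshuffling_def by (blast intro: uniform_rule_share_permute)

lemma uniform_rule_imp_source_anonymous: "uniform_rule M K C \<Longrightarrow> source_anonymous M K C"
  unfolding source_anonymous_def by (blast intro: uniform_rule_share_permute)

lemma reshuffling_source_anonymous_equal_shares:
  fixes C :: "('n::finite \<Rightarrow> 'a \<Rightarrow> real) \<Rightarrow> 'n \<Rightarrow> 'a \<Rightarrow> real"
  assumes "reshuffling M K C" and "source_anonymous M K C" and "pool K X"
  shows "AE \<omega> in M. \<forall>j. C X j \<omega> = C X i \<omega>"
proof -
  have "AE \<omega> in M. C X j \<omega> = C X i \<omega>" for j
  proof -
    let ?\<pi> = "Transposition.transpose i j"
    have \<pi>: "?\<pi> permutes (UNIV :: 'n set)"
      by (rule permutes_swap_id) auto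
    have "AE \<omega> in M. C (X \<circ> ?\<pi>) i \<omega> = C X (?\<pi> i) \<omega>"
      using assms(1,3) \<pi> unfolding reshuffling_def by blast
    moreover have "AE \<omega> in M. C (X \<circ> ?\<pi>) i \<omega> = C X i \<omega>"
      using assms(2,3) \<pi> unfolding source_anonymous_def by blast
    ultimately show ?thesis by eventually_elim simp
  qed
  then have "AE \<omega> in M. \<forall>j\<in>UNIV. C X j \<omega> = C X i \<omega>"
    by (intro AE_finite_allI) auto
  then show ?thesis
    by simp
qed

lemma reshuffling_source_anonymous_imp_uniform_rule:
  fixes C :: "('n::finite \<Rightarrow> 'a \<Rightarrow> real) \<Rightarrow> 'n \<Rightarrow> 'a \<Rightarrow> real"
  assumes "rs_rule M K C" and "reshuffling M K C" and "source_anonymous M K C"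
  shows "uniform_rule M K C"
  unfolding uniform_rule_def
proof (intro allI impI)
  fix X :: "'n \<Rightarrow> 'a \<Rightarrow> real" and i
  assume X: "pool K X"
  have "AE \<omega> in M. \<forall>j. C X j \<omega> = C X i \<omega>"
    using assms(2,3) X by (rule reshuffling_source_anonymous_equal_shares)
  moreover have "AE \<omega> in M. (\<Sum>j\<in>UNIV. C X j \<omega>) = agg X \<omega>"
    using assms(1) X unfolding rs_rule_def by blast
  ultimately show "AE \<omega> in M. C X i \<omega> = agg X \<omega> / real CARD('n)"
    by eventually_elim (rule equal_summands_eq_sum_div_card; simp)
qed

theorem theorem1:
  fixes M :: "'a measure" and K :: "('a \<Rightarrow> real) set"
    and C :: "('n::finite \<Rightarrow> 'a \<Rightarrow> real) \<Rightarrow> 'n \<Rightarrow> 'a \<Rightarrow> real"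
  assumes "prob_space M" and "rv_cone M K" and "rs_rule M K C"
  shows "uniform_rule M K C \<longleftrightarrow> reshuffling M K C \<and> source_anonymous M K C"
  using assms(3) uniform_rule_imp_reshuffling uniform_rule_imp_source_anonymous
    reshuffling_source_anonymous_imp_uniform_rule by blast

end
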